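(* Let $M$ be a loopless binary matroid on an $n$-element ground set $S$, of rank $r$. 1. If the ground set $S$ is colored with exactly $r$ colors (every color being used), then $M$ contains a rainbow colored circuit or a monochromatic cut. 2. If the ground set $S$ is colored with exactly $n-r$ colors (every color being used), then $M$ contains a rainbow colored cut or a monochromatic circuit.
   Context: A coloring of $S$ is a partition of $S$ into nonempty color classes. A subset of $S$ is rainbow colored if no two of its elements have the same color, and monochromatic if all its elements have the same color. A cut of a matroid is an inclusionwise minimal subset of the ground set intersecting every basis (equivalently, a circuit of the dual matroid). A matroid is binary if it is representable over $GF(2)$. *)

theory Defs
  imports Main "HOL-Library.Z2"
begin

definition matroid :: "'a set \<Rightarrow> ('a set \<Rightarrow> bool) \<Rightarrow> bool" where
  "matroid S indep \<longleftrightarrow>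
     finite S \<and>
     (\<forall>X. indep X \<longrightarrow> X \<subseteq> S) \<and>
     indep {} \<and>
     (\<forall>X Y. indep X \<and> Y \<subseteq> X \<longrightarrow> indep Y) \<and>
     (\<forall>X Y. indep X \<and> indep Y \<and> card X < card Y \<longrightarrow>
        (\<exists>e\<in>Y - X. indep (insert e X)))"

(* Linear independence over GF(2) of the columns {v e | e \<in> X} of a matrix with
   m rows (entries v e i, i < m); columns are indexed by elements, so repeated
   columns are dependent, exactly as in the column matroid of a matrix. *)
definition gf2_col_indep :: "nat \<Rightarrow> ('a \<Rightarrow> nat \<Rightarrow> bit) \<Rightarrow> 'a set \<Rightarrow> bool" where
  "gf2_col_indep m v X \<longleftrightarrow>
     (\<forall>c :: 'a \<Rightarrow> bit. (\<forall>i<m. (\<Sum>e\<in>X. c e * v e i) = 0) \<longrightarrow> (\<forall>e\<in>X. c e = 0))"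

definition binary_matroid :: "'a set \<Rightarrow> ('a set \<Rightarrow> bool) \<Rightarrow> bool" where
  "binary_matroid S indep \<longleftrightarrow> matroid S indep \<and>
     (\<exists>(m::nat) (v :: 'a \<Rightarrow> nat \<Rightarrow> bit). \<forall>X. X \<subseteq> S \<longrightarrow> (indep X \<longleftrightarrow> gf2_col_indep m v X))"

definition is_basis :: "'a set \<Rightarrow> ('a set \<Rightarrow> bool) \<Rightarrow> 'a set \<Rightarrow> bool" where
  "is_basis S indep B \<longleftrightarrow> B \<subseteq> S \<and> indep B \<and> (\<forall>X. B \<subset> X \<and> X \<subseteq> S \<longrightarrow> \<not> indep X)"

definition matroid_rank :: "'a set \<Rightarrow> ('a set \<Rightarrow> bool) \<Rightarrow> nat" where
  "matroid_rank S indep = Max (card ` {X. X \<subseteq> S \<and> indep X})"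

definition is_circuit :: "'a set \<Rightarrow> ('a set \<Rightarrow> bool) \<Rightarrow> 'a set \<Rightarrow> bool" where
  "is_circuit S indep C \<longleftrightarrow> C \<subseteq> S \<and> \<not> indep C \<and> (\<forall>D. D \<subset> C \<longrightarrow> indep D)"

definition is_cut :: "'a set \<Rightarrow> ('a set \<Rightarrow> bool) \<Rightarrow> 'a set \<Rightarrow> bool" where
  "is_cut S indep K \<longleftrightarrow> K \<subseteq> S \<and>
     (\<forall>B. is_basis S indep B \<longrightarrow> K \<inter> B \<noteq> {}) \<and>
     (\<forall>K'. K' \<subset> K \<longrightarrow> (\<exists>B. is_basis S indep B \<and> K' \<inter> B = {}))"

definition loopless :: "'a set \<Rightarrow> ('a set \<Rightarrow> bool) \<Rightarrow> bool" where
  "loopless S indep \<longleftrightarrow> (\<forall>e\<in>S. indep {e})"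

(* a coloring is given by a colour function col; the colour classes are the nonempty
   fibres of col on S, so the number of colours used is card (col ` S) *)
definition rainbow :: "('a \<Rightarrow> 'c) \<Rightarrow> 'a set \<Rightarrow> bool" where
  "rainbow col X \<longleftrightarrow> inj_on col X"

definition monochromatic :: "('a \<Rightarrow> 'c) \<Rightarrow> 'a set \<Rightarrow> bool" where
  "monochromatic col X \<longleftrightarrow> (\<forall>x\<in>X. \<forall>y\<in>X. col x = col y)"

end

(* Suppose there is no rainbow circuit. A transversal B of the r colour classes is then
   independent of size r, hence a basis, and each e outside B has a fundamental cycle F e,
   supported on e and B, which always contains the element of B of the colour of e.
   If some b in B lies only in fundamental cycles of elements of its own colour, the
   fundamental cocycle of b lies in the colour class of b, which therefore contains a cut.
   Otherwise every e outside B has a successor e' of another colour with F e' passing through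
   the element of B of the colour of e. A minimal successor-closed set E is a permutation of
   distinct colours, and then the sum of F e over E is a nonzero cycle supported on the rainbow
   set E + (B - partners of E), which is impossible.
   The second statement is the same argument in the dual matroid: with no rainbow cut, a
   transversal T of the n - r colour classes avoids a basis, so S - T is a basis, and cycles
   and cocycles exchange their roles. *)

theory Submission
  imports Defs
begin

declare add_bit_eq_xor [simp del] mult_bit_eq_and [simp del]

lemma bit_add_self: "(a::bit) + a = 0"
  by (cases a) simp_all

lemma bit_add_eq_0_iff: "(a::bit) + b = 0 \<longleftrightarrow> a = b"
  by (cases a; cases b) simp_all

lemma bij_betw_successor_choice:
  assumes "finite E" and "E \<noteq> {}" and q: "\<forall>e\<in>E. q e \<in> E \<and> R e (q e)"
    and min: "\<And>E'. E' \<subseteq> E \<Longrightarrow> E' \<noteq> {} \<Longrightarrow> \<forall>e\<in>E'. \<exists>e'\<in>E'. R e e' \<Longrightarrow> card E \<le> card E'"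
  shows "bij_betw q E E"
proof -
  have "q ` E \<subseteq> E" using q by blast
  moreover have "\<forall>y\<in>q ` E. \<exists>y'\<in>q ` E. R y y'" using q by blast
  ultimately have "card E \<le> card (q ` E)" using \<open>E \<noteq> {}\<close> by (intro min) auto
  then have "card (q ` E) = card E" using card_image_le[OF \<open>finite E\<close>, of q] by linarith
  with \<open>q ` E \<subseteq> E\<close> show ?thesis
    using \<open>finite E\<close> by (simp add: bij_betw_def eq_card_imp_inj_on card_subset_eq)
qed

lemma ex_successor_permutation_subset:
  fixes P :: "'a set" and R :: "'a \<Rightarrow> 'a \<Rightarrow> bool"
  assumes "finite P" and "P \<noteq> {}" and "\<forall>e\<in>P. \<exists>e'\<in>P. R e e'"
  shows "\<exists>E\<subseteq>P. E \<noteq> {} \<and> (\<forall>e\<in>E. \<exists>e'\<in>E. R e e') \<and>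
           (\<forall>e\<in>E. \<forall>e1\<in>E. \<forall>e2\<in>E. R e e1 \<longrightarrow> R e e2 \<longrightarrow> e1 = e2) \<and>
           (\<forall>e1\<in>E. \<forall>e2\<in>E. \<forall>e'\<in>E. R e1 e' \<longrightarrow> R e2 e' \<longrightarrow> e1 = e2)"
proof -
  let ?closed = "\<lambda>E. E \<subseteq> P \<and> E \<noteq> {} \<and> (\<forall>e\<in>E. \<exists>e'\<in>E. R e e')"
  obtain E where E: "?closed E" and min: "\<And>E'. ?closed E' \<Longrightarrow> card E \<le> card E'"
    using ex_has_least_nat[of ?closed P card] assms by blast
  have "finite E" using E \<open>finite P\<close> finite_subset by blast
  \<comment> \<open>by minimality of E, every choice of successors permutes E\<close>
  have perm: "bij_betw q E E" if "\<forall>e\<in>E. q e \<in> E \<and> R e (q e)" for q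
  proof (rule bij_betw_successor_choice[where R = R, OF \<open>finite E\<close> _ that])
    show "E \<noteq> {}" using E by blast
    show "card E \<le> card E'" if "E' \<subseteq> E" "E' \<noteq> {}" "\<forall>e\<in>E'. \<exists>e'\<in>E'. R e e'" for E'
      using that E by (intro min) blast
  qed
  have "\<forall>e\<in>E. \<exists>e'. e' \<in> E \<and> R e e'" using E by blast
  then obtain q where q: "\<forall>e\<in>E. q e \<in> E \<and> R e (q e)" by (rule bchoice[THEN exE])
  have inj_q: "inj_on q E" using perm[OF q] by (rule bij_betw_imp_inj_on)
  have unique: "e' = q e" if "e \<in> E" "e' \<in> E" "R e e'" for e e'
  proof (rule ccontr)
    assume "e' \<noteq> q e"
    have "e' \<in> q ` E" using perm[OF q] \<open>e' \<in> E\<close> by (simp add: bij_betw_def)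
    then obtain x where "x \<in> E" "q x = e'" by blast
    have "bij_betw (q(e := e')) E E" using q that by (intro perm) auto
    then have "inj_on (q(e := e')) E" by (rule bij_betw_imp_inj_on)
    moreover have "(q(e := e')) x = (q(e := e')) e" using \<open>q x = e'\<close> \<open>e' \<noteq> q e\<close> by auto
    ultimately have "x = e" using \<open>x \<in> E\<close> \<open>e \<in> E\<close> by (rule inj_onD)
    then show False using \<open>q x = e'\<close> \<open>e' \<noteq> q e\<close> by simp
  qed
  have "\<forall>e\<in>E. \<forall>e1\<in>E. \<forall>e2\<in>E. R e e1 \<longrightarrow> R e e2 \<longrightarrow> e1 = e2"
    using unique by blast
  moreover have "\<forall>e1\<in>E. \<forall>e2\<in>E. \<forall>e'\<in>E. R e1 e' \<longrightarrow> R e2 e' \<longrightarrow> e1 = e2"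
    using unique inj_q by (metis inj_onD)
  moreover have "E \<subseteq> P" "E \<noteq> {}" "\<forall>e\<in>E. \<exists>e'\<in>E. R e e'" using E by blast+
  ultimately show ?thesis by blast
qed

text \<open>No nonzero vector of V is supported in X: for the cycle space of a binary matroid this
  means independence, for its cocycle space disjointness from some basis.\<close>

definition cycle_free :: "(('a \<Rightarrow> bit) \<Rightarrow> bool) \<Rightarrow> 'a set \<Rightarrow> bool" where
  "cycle_free V X \<longleftrightarrow> (\<forall>z. V z \<and> (\<forall>x. x \<notin> X \<longrightarrow> z x = 0) \<longrightarrow> (\<forall>x. z x = 0))"

lemma cycle_freeI: "(\<And>z x. V z \<Longrightarrow> (\<And>y. y \<notin> X \<Longrightarrow> z y = 0) \<Longrightarrow> z x = 0) \<Longrightarrow> cycle_free V X"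
  unfolding cycle_free_def by blast

lemma cycle_freeD: "cycle_free V X \<Longrightarrow> (\<And>x. x \<notin> X \<Longrightarrow> z x = 0) \<Longrightarrow> V z \<Longrightarrow> z x = 0"
  unfolding cycle_free_def by blast

lemma sum_closed:
  fixes V :: "('a \<Rightarrow> 'b::comm_monoid_add) \<Rightarrow> bool"
  assumes "V (\<lambda>_. 0)" and "\<And>z w. V z \<Longrightarrow> V w \<Longrightarrow> V (\<lambda>x. z x + w x)"
  shows "finite E \<Longrightarrow> (\<And>e. e \<in> E \<Longrightarrow> V (f e)) \<Longrightarrow> V (\<lambda>x. \<Sum>e\<in>E. f e x)"
  by (induction E rule: finite_induct) (simp_all add: assms)

text \<open>An abstraction of a basis B that is a transversal of the colouring, together with the
  fundamental vectors F e (e outside B) of a space V in which rainbow sets are cycle-free. It is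
  instantiated with fundamental cycles in the matroid and with fundamental cocycles in its dual.\<close>

locale coloured_fundamental_system =
  fixes B N :: "'a set" and col :: "'a \<Rightarrow> 'c"
    and V :: "('a \<Rightarrow> bit) \<Rightarrow> bool" and F :: "'a \<Rightarrow> 'a \<Rightarrow> bit"
  assumes finite_N: "finite N" and disjoint: "B \<inter> N = {}" and B_ne: "B \<noteq> {}"
    and inj_col_B: "inj_on col B" and col_N: "col ` N \<subseteq> col ` B"
    and V_zero: "V (\<lambda>_. 0)" and V_add: "\<And>z w. V z \<Longrightarrow> V w \<Longrightarrow> V (\<lambda>x. z x + w x)"
    and rainbow_cycle_free: "\<And>X. X \<subseteq> B \<union> N \<Longrightarrow> inj_on col X \<Longrightarrow> cycle_free V X"
    and F_in_V: "\<And>e. e \<in> N \<Longrightarrow> V (F e)"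
    and F_support: "\<And>e x. e \<in> N \<Longrightarrow> x \<notin> insert e B \<Longrightarrow> F e x = 0"
    and F_diag: "\<And>e. e \<in> N \<Longrightarrow> F e e = 1"
begin

definition partner :: "'a \<Rightarrow> 'a" where
  "partner e = the_inv_into B col (col e)"

lemma partner: "e \<in> B \<union> N \<Longrightarrow> partner e \<in> B \<and> col (partner e) = col e"
proof -
  assume "e \<in> B \<union> N"
  then have "col e \<in> col ` B" using col_N by blast
  then show ?thesis
    unfolding partner_def using inj_col_B by (simp add: the_inv_into_into f_the_inv_into_f)
qed

lemma partner_self: "b \<in> B \<Longrightarrow> partner b = b"
  unfolding partner_def using inj_col_B by (rule the_inv_into_f_f)

lemma F_partner: "e \<in> N \<Longrightarrow> F e (partner e) = 1"
proof (rule ccontr)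
  assume e: "e \<in> N" and "F e (partner e) \<noteq> 1"
  let ?X = "insert e (B - {partner e})"
  have "col e \<notin> col ` (B - {partner e})"
  proof
    assume "col e \<in> col ` (B - {partner e})"
    then obtain b where "b \<in> B - {partner e}" and "col e = col b" by (rule imageE)
    then show False using partner_self[of b] unfolding partner_def by simp
  qed
  then have "inj_on col ?X" using inj_on_subset[OF inj_col_B] by auto
  moreover have "?X \<subseteq> B \<union> N" using e by blast
  ultimately have "cycle_free V ?X" by (rule rainbow_cycle_free[rotated])
  moreover have "F e x = 0" if "x \<notin> ?X" for x
  proof (cases "x = partner e")
    case True
    then show ?thesis using \<open>F e (partner e) \<noteq> 1\<close> by simp
  next
    case False
    then show ?thesis using that F_support[OF e] by simp
  qed
  ultimately have "F e e = 0" using F_in_V[OF e] by (rule cycle_freeD)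
  with F_diag[OF e] show False by simp
qed

definition hits :: "'a \<Rightarrow> 'a \<Rightarrow> bool" where
  "hits e e' \<longleftrightarrow> col e' \<noteq> col e \<and> F e' (partner e) \<noteq> 0"

context
  fixes E :: "'a set"
  assumes E_subset: "E \<subseteq> N"
    and succ: "\<forall>e\<in>E. \<exists>e'\<in>E. hits e e'"
    and succ_unique: "\<forall>e\<in>E. \<forall>e1\<in>E. \<forall>e2\<in>E. hits e e1 \<longrightarrow> hits e e2 \<longrightarrow> e1 = e2"
    and pred_unique: "\<forall>e1\<in>E. \<forall>e2\<in>E. \<forall>e'\<in>E. hits e1 e' \<longrightarrow> hits e2 e' \<longrightarrow> e1 = e2"
begin

lemma hitting_inj_on_col: "inj_on col E"
proof (rule inj_onI)
  fix e1 e2 assume "e1 \<in> E" "e2 \<in> E" "col e1 = col e2"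
  moreover obtain e' where "e' \<in> E" "hits e1 e'" using succ \<open>e1 \<in> E\<close> by blast
  moreover have "hits e2 e'"
    using \<open>hits e1 e'\<close> \<open>col e1 = col e2\<close> unfolding hits_def partner_def by simp
  ultimately show "e1 = e2" using pred_unique by (meson \<open>e' \<in> E\<close>)
qed

lemma hitting_inj_on_col_Un: "inj_on col (E \<union> (B - partner ` E))"
proof -
  have "col e \<noteq> col b" if "e \<in> E" "b \<in> B - partner ` E" for e b
  proof
    assume "col e = col b"
    then have "b = partner e" using partner_self[of b] that unfolding partner_def by simp
    then show False using that by blast
  qed
  then show ?thesis
    using hitting_inj_on_col inj_on_subset[OF inj_col_B] by (auto simp: inj_on_Un)
qed

lemma hitting_sum_vanishes:
  assumes "x \<notin> E \<union> (B - partner ` E)"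
  shows "(\<Sum>e\<in>E. F e x) = 0"
proof (cases "x \<in> partner ` E")
  case True
  have "finite E" using E_subset finite_N by (rule finite_subset)
  obtain e0 where e0: "e0 \<in> E" "x = partner e0" using True by blast
  then obtain w where w: "w \<in> E" "hits e0 w" using succ by blast
  have "w \<noteq> e0" using \<open>hits e0 w\<close> unfolding hits_def by blast
  \<comment> \<open>F e0 and F w are the only vectors of E that are nonzero at x = partner e0\<close>
  have "F e x = 0" if "e \<in> E - {e0, w}" for e
  proof (rule ccontr)
    assume "F e x \<noteq> 0"
    have "col e \<noteq> col e0" using hitting_inj_on_col e0 that by (auto dest: inj_onD)
    then have "hits e0 e" unfolding hits_def using \<open>F e x \<noteq> 0\<close> e0 by simp
    then have "e = w" using succ_unique e0 w that by blast
    then show False using that by blast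
  qed
  then have "(\<Sum>e\<in>E. F e x) = (\<Sum>e\<in>{e0, w}. F e x)"
    using \<open>finite E\<close> e0 w by (intro sum.mono_neutral_right) auto
  also have "\<dots> = F e0 x + F w x" using \<open>w \<noteq> e0\<close> by simp
  also have "\<dots> = 1 + 1"
    using F_partner \<open>hits e0 w\<close> e0 E_subset unfolding hits_def by auto
  finally show ?thesis by simp
next
  case False
  then have "x \<notin> insert e B" if "e \<in> E" for e using that assms by blast
  then show ?thesis using F_support E_subset by (intro sum.neutral) blast
qed

lemma hitting_empty: "E = {}"
proof (rule ccontr)
  assume "E \<noteq> {}"
  then obtain e0 where "e0 \<in> E" by blast
  have "finite E" using E_subset finite_N by (rule finite_subset)
  define Z where "Z x = (\<Sum>e\<in>E. F e x)" for x
  have "E \<union> (B - partner ` E) \<subseteq> B \<union> N" using E_subset by blast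
  then have "cycle_free V (E \<union> (B - partner ` E))"
    using hitting_inj_on_col_Un by (rule rainbow_cycle_free)
  moreover have "Z x = 0" if "x \<notin> E \<union> (B - partner ` E)" for x
    unfolding Z_def using that by (rule hitting_sum_vanishes)
  moreover have "V Z"
    unfolding Z_def using \<open>finite E\<close> F_in_V E_subset
    by (auto intro: sum_closed[of V, OF V_zero V_add])
  ultimately have "Z e0 = 0" by (rule cycle_freeD)
  moreover have "Z e0 = F e0 e0 + (\<Sum>e\<in>E - {e0}. F e e0)"
    unfolding Z_def using \<open>finite E\<close> \<open>e0 \<in> E\<close> by (rule sum.remove)
  moreover have "F e e0 = 0" if "e \<in> E - {e0}" for e
  proof -
    have "e0 \<notin> insert e B" using that \<open>e0 \<in> E\<close> E_subset disjoint by blast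
    then show ?thesis using F_support that E_subset by blast
  qed
  ultimately show False using F_diag \<open>e0 \<in> E\<close> E_subset by auto
qed

end

lemma ex_monochromatic_column: "\<exists>b\<in>B. \<forall>e\<in>N. col e \<noteq> col b \<longrightarrow> F e b = 0"
proof (rule ccontr)
  assume "\<not> ?thesis"
  then have hit: "\<exists>e\<in>N. col e \<noteq> col b \<and> F e b \<noteq> 0" if "b \<in> B" for b
    using that by blast
  have "\<exists>e'\<in>N. hits e e'" if "e \<in> N" for e
    using hit[of "partner e"] partner[of e] that unfolding hits_def by auto
  moreover have "N \<noteq> {}" using hit B_ne by blast
  ultimately obtain E where "E \<noteq> {}" and "E \<subseteq> N" "\<forall>e\<in>E. \<exists>e'\<in>E. hits e e'"
    "\<forall>e\<in>E. \<forall>e1\<in>E. \<forall>e2\<in>E. hits e e1 \<longrightarrow> hits e e2 \<longrightarrow> e1 = e2"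
    "\<forall>e1\<in>E. \<forall>e2\<in>E. \<forall>e'\<in>E. hits e1 e' \<longrightarrow> hits e2 e' \<longrightarrow> e1 = e2"
    using ex_successor_permutation_subset[OF finite_N, of hits] by blast
  from this(2-5) have "E = {}" by (rule hitting_empty)
  with \<open>E \<noteq> {}\<close> show False by simp
qed

end

lemma ex_minimal_subset:
  assumes "finite X" and "P X"
  obtains Y where "Y \<subseteq> X" and "P Y" and "\<forall>Y'\<subset>Y. \<not> P Y'"
proof -
  obtain Y where Y: "Y \<subseteq> X \<and> P Y" and min: "\<And>Y'. Y' \<subseteq> X \<and> P Y' \<Longrightarrow> card Y \<le> card Y'"
    using ex_has_least_nat[of "\<lambda>Y. Y \<subseteq> X \<and> P Y" X card] assms by blast
  have "\<not> P Y'" if "Y' \<subset> Y" for Y'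
  proof
    assume "P Y'"
    then have "card Y \<le> card Y'" using that Y by (intro min) blast
    moreover have "card Y' < card Y"
      using that Y \<open>finite X\<close> by (meson psubset_card_mono finite_subset)
    ultimately show False by simp
  qed
  with Y that show ?thesis by blast
qed

lemma ex_transversal:
  obtains T where "T \<subseteq> S" and "inj_on f T" and "f ` T = f ` S"
proof
  let ?T = "inv_into S f ` f ` S"
  show "?T \<subseteq> S" by (auto intro: inv_into_into)
  show "f ` ?T = f ` S" by (force simp: image_image f_inv_into_f)
  show "inj_on f ?T" by (auto intro!: inj_onI simp: f_inv_into_f)
qed

lemma monochromatic_subset: "K \<subseteq> {x. col x = c} \<Longrightarrow> monochromatic col K"
  unfolding monochromatic_def by blast

locale gf2_represented_matroid =
  fixes S :: "'a set" and indep :: "'a set \<Rightarrow> bool" and m :: nat and v :: "'a \<Rightarrow> nat \<Rightarrow> bit"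
  assumes matroid: "matroid S indep"
    and represents: "\<And>X. X \<subseteq> S \<Longrightarrow> indep X \<longleftrightarrow> gf2_col_indep m v X"
begin

lemma finite_S: "finite S"
  and indep_subset: "indep X \<Longrightarrow> X \<subseteq> S"
  and indep_empty: "indep {}"
  and indep_augment: "indep X \<Longrightarrow> indep Y \<Longrightarrow> card X < card Y \<Longrightarrow> \<exists>e\<in>Y - X. indep (insert e X)"
  using matroid unfolding matroid_def by blast+

lemma indep_card_le_rank: "indep X \<Longrightarrow> card X \<le> matroid_rank S indep"
  unfolding matroid_rank_def using finite_S indep_subset by (intro Max_ge) auto

lemma ex_indep_card_rank: "\<exists>X. indep X \<and> card X = matroid_rank S indep"
proof -
  have "finite (card ` {X. X \<subseteq> S \<and> indep X})" using finite_S by simp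
  moreover have "{X. X \<subseteq> S \<and> indep X} \<noteq> {}" using indep_empty by blast
  ultimately have "matroid_rank S indep \<in> card ` {X. X \<subseteq> S \<and> indep X}"
    unfolding matroid_rank_def by (intro Max_in) auto
  then show ?thesis by (metis (no_types, lifting) imageE mem_Collect_eq)
qed

lemma basis_if_card_rank:
  assumes "indep X" and "card X = matroid_rank S indep"
  shows "is_basis S indep X"
  unfolding is_basis_def
proof (intro conjI allI impI)
  fix Y assume Y: "X \<subset> Y \<and> Y \<subseteq> S"
  then have "card X < card Y" using finite_S by (meson psubset_card_mono finite_subset)
  then show "\<not> indep Y" using indep_card_le_rank assms(2) by fastforce
qed (use assms indep_subset in auto)

lemma card_basis:
  assumes "is_basis S indep B"
  shows "card B = matroid_rank S indep"
proof -
  have "indep B" using assms unfolding is_basis_def by blast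
  obtain X where "indep X" "card X = matroid_rank S indep" using ex_indep_card_rank by blast
  have "\<not> card B < card X"
  proof
    assume "card B < card X"
    then obtain e where "e \<in> X - B" "indep (insert e B)"
      using indep_augment \<open>indep B\<close> \<open>indep X\<close> by blast
    moreover have "B \<subset> insert e B" "insert e B \<subseteq> S"
      using \<open>e \<in> X - B\<close> \<open>indep (insert e B)\<close> indep_subset by auto
    ultimately show False using assms unfolding is_basis_def by blast
  qed
  then show ?thesis using indep_card_le_rank[OF \<open>indep B\<close>] \<open>card X = _\<close> by linarith
qed

lemma dependent_contains_circuit:
  assumes "X \<subseteq> S" and "\<not> indep X"
  obtains C where "C \<subseteq> X" and "is_circuit S indep C"
proof -
  have "finite X" using assms finite_S finite_subset by blast
  then obtain C where C: "C \<subseteq> X" "\<not> indep C" and min: "\<forall>D\<subset>C. \<not> \<not> indep D"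
    using \<open>\<not> indep X\<close> by (rule ex_minimal_subset[of _ "\<lambda>Y. \<not> indep Y"])
  have "is_circuit S indep C" unfolding is_circuit_def using C assms(1) min by auto
  with \<open>C \<subseteq> X\<close> show ?thesis by (rule that)
qed

lemma meets_all_bases_contains_cut:
  assumes "X \<subseteq> S" and "\<forall>B. is_basis S indep B \<longrightarrow> X \<inter> B \<noteq> {}"
  obtains K where "K \<subseteq> X" and "is_cut S indep K"
proof -
  have "finite X" using assms finite_S finite_subset by blast
  then obtain K where K: "K \<subseteq> X" "\<forall>B. is_basis S indep B \<longrightarrow> K \<inter> B \<noteq> {}"
    and min: "\<forall>K'\<subset>K. \<not> (\<forall>B. is_basis S indep B \<longrightarrow> K' \<inter> B \<noteq> {})"
    using assms(2) by (rule ex_minimal_subset)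
  have "is_cut S indep K" unfolding is_cut_def using K assms(1) min by blast
  with \<open>K \<subseteq> X\<close> show ?thesis by (rule that)
qed


definition cycle :: "('a \<Rightarrow> bit) \<Rightarrow> bool" where
  "cycle z \<longleftrightarrow> (\<forall>x. x \<notin> S \<longrightarrow> z x = 0) \<and> (\<forall>i<m. (\<Sum>x\<in>S. z x * v x i) = 0)"

definition cocycle :: "('a \<Rightarrow> bit) \<Rightarrow> bool" where
  "cocycle z \<longleftrightarrow> (\<forall>x. x \<notin> S \<longrightarrow> z x = 0) \<and> (\<forall>c. cycle c \<longrightarrow> (\<Sum>x\<in>S. c x * z x) = 0)"

lemma cycle_zero: "cycle (\<lambda>_. 0)"
  and cycle_add: "cycle z \<Longrightarrow> cycle w \<Longrightarrow> cycle (\<lambda>x. z x + w x)"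
  and cycle_scale: "cycle z \<Longrightarrow> cycle (\<lambda>x. a * z x)"
  unfolding cycle_def
  by (simp_all add: distrib_right sum.distrib mult.assoc flip: sum_distrib_left)

lemma cocycle_zero: "cocycle (\<lambda>_. 0)"
  and cocycle_add: "cocycle z \<Longrightarrow> cocycle w \<Longrightarrow> cocycle (\<lambda>x. z x + w x)"
  unfolding cocycle_def by (simp_all add: distrib_left sum.distrib)

lemma indep_iff_cycle_free:
  assumes "X \<subseteq> S"
  shows "indep X \<longleftrightarrow> cycle_free cycle X"
proof
  assume "indep X"
  show "cycle_free cycle X"
  proof (rule cycle_freeI)
    fix z x assume "cycle z" and z: "\<And>y. y \<notin> X \<Longrightarrow> z y = 0"
    have "(\<Sum>e\<in>X. z e * v e i) = 0" if "i < m" for i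
    proof -
      have "(\<Sum>e\<in>X. z e * v e i) = (\<Sum>e\<in>S. z e * v e i)"
        using finite_S assms z by (intro sum.mono_neutral_left) auto
      then show ?thesis using \<open>cycle z\<close> that unfolding cycle_def by simp
    qed
    then have "\<forall>e\<in>X. z e = 0"
      using represents[OF assms] \<open>indep X\<close> unfolding gf2_col_indep_def by blast
    then show "z x = 0" using z by (cases "x \<in> X") auto
  qed
next
  assume "cycle_free cycle X"
  show "indep X"
  proof (rule ccontr)
    assume "\<not> indep X"
    then obtain c e where c: "\<forall>i<m. (\<Sum>e\<in>X. c e * v e i) = 0" and "e \<in> X" "c e \<noteq> 0"
      using represents[OF assms] unfolding gf2_col_indep_def by blast
    define z where "z x = (if x \<in> X then c x else 0)" for x
    have "(\<Sum>x\<in>S. z x * v x i) = (\<Sum>x\<in>X. c x * v x i)" for i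
    proof -
      have "(\<Sum>x\<in>S. z x * v x i) = (\<Sum>x\<in>X. z x * v x i)"
        using finite_S assms by (intro sum.mono_neutral_right) (auto simp: z_def)
      then show ?thesis by (simp add: z_def)
    qed
    then have "cycle z" using c assms unfolding cycle_def z_def by auto
    then have "z e = 0"
      using \<open>cycle_free cycle X\<close> by (rule cycle_freeD[rotated 2]) (simp add: z_def)
    then show False using \<open>e \<in> X\<close> \<open>c e \<noteq> 0\<close> by (simp add: z_def)
  qed
qed

definition fund_cycle :: "'a set \<Rightarrow> 'a \<Rightarrow> 'a \<Rightarrow> bit" where
  "fund_cycle B e = (SOME z. cycle z \<and> (\<forall>x. x \<notin> insert e B \<longrightarrow> z x = 0) \<and> z e = 1)"

lemma fund_cycle:
  assumes B: "is_basis S indep B" and e: "e \<in> S - B"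
  shows "cycle (fund_cycle B e)" and "\<And>x. x \<notin> insert e B \<Longrightarrow> fund_cycle B e x = 0"
    and "fund_cycle B e e = 1"
proof -
  have "B \<subseteq> S" "indep B" using B unfolding is_basis_def by auto
  then have "\<not> indep (insert e B)" using B e unfolding is_basis_def by blast
  then have "\<not> cycle_free cycle (insert e B)"
    using indep_iff_cycle_free \<open>B \<subseteq> S\<close> e by blast
  then obtain z y where z: "cycle z" "\<And>x. x \<notin> insert e B \<Longrightarrow> z x = 0" and "z y \<noteq> 0"
    unfolding cycle_free_def by blast
  have "z e = 1"
  proof (rule ccontr)
    assume "z e \<noteq> 1"
    have "cycle_free cycle B" using indep_iff_cycle_free \<open>B \<subseteq> S\<close> \<open>indep B\<close> by blast
    moreover have "z x = 0" if "x \<notin> B" for x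
      using z(2)[of x] that \<open>z e \<noteq> 1\<close> by (cases "x = e") auto
    ultimately have "z y = 0" using \<open>cycle z\<close> by (rule cycle_freeD)
    then show False using \<open>z y \<noteq> 0\<close> by simp
  qed
  then have "\<exists>z. cycle z \<and> (\<forall>x. x \<notin> insert e B \<longrightarrow> z x = 0) \<and> z e = 1" using z by blast
  from someI_ex[OF this] show "cycle (fund_cycle B e)" "\<And>x. x \<notin> insert e B \<Longrightarrow> fund_cycle B e x = 0"
    "fund_cycle B e e = 1" unfolding fund_cycle_def by blast+
qed

lemma cycle_eq_sum_fund_cycle:
  assumes B: "is_basis S indep B" and "cycle c"
  shows "c x = (\<Sum>t\<in>S - B. c t * fund_cycle B t x)"
proof -
  have "B \<subseteq> S" "indep B" using B unfolding is_basis_def by auto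
  define w where "w y = c y + (\<Sum>t\<in>S - B. c t * fund_cycle B t y)" for y
  have "cycle (\<lambda>y. \<Sum>t\<in>S - B. c t * fund_cycle B t y)"
    using finite_S fund_cycle(1)[OF B]
    by (intro sum_closed[of cycle, OF cycle_zero cycle_add] cycle_scale) auto
  then have "cycle w" unfolding w_def using \<open>cycle c\<close> by (rule cycle_add[rotated])
  have "cycle_free cycle B" using indep_iff_cycle_free \<open>B \<subseteq> S\<close> \<open>indep B\<close> by blast
  moreover have "w y = 0" if "y \<notin> B" for y
  proof (cases "y \<in> S")
    case True
    then have y: "y \<in> S - B" using that by blast
    have "(\<Sum>t\<in>S - B. c t * fund_cycle B t y)
        = c y * fund_cycle B y y + (\<Sum>t\<in>S - B - {y}. c t * fund_cycle B t y)"
      using finite_S y by (intro sum.remove) auto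
    also have "(\<Sum>t\<in>S - B - {y}. c t * fund_cycle B t y) = 0"
      using fund_cycle(2)[OF B] y by (intro sum.neutral) auto
    finally show ?thesis unfolding w_def using fund_cycle(3)[OF B y] by (simp add: bit_add_self)
  next
    case False
    then have "c y = 0" using \<open>cycle c\<close> unfolding cycle_def by blast
    moreover have "fund_cycle B t y = 0" if "t \<in> S - B" for t
    proof (rule fund_cycle(2)[OF B that])
      show "y \<notin> insert t B" using False that \<open>B \<subseteq> S\<close> by blast
    qed
    ultimately show ?thesis unfolding w_def by simp
  qed
  ultimately have "w x = 0" using \<open>cycle w\<close> by (rule cycle_freeD)
  then show ?thesis unfolding w_def by (simp add: bit_add_eq_0_iff)
qed

definition fund_cocycle :: "'a set \<Rightarrow> 'a \<Rightarrow> 'a \<Rightarrow> bit" where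
  "fund_cocycle B b x = of_bool (x = b) + (if x \<in> S - B then fund_cycle B x b else 0)"

lemma fund_cocycle_eq_fund_cycle: "b \<in> B \<Longrightarrow> t \<in> S - B \<Longrightarrow> fund_cocycle B b t = fund_cycle B t b"
  unfolding fund_cocycle_def by auto

lemma cocycle_fund_cocycle:
  assumes B: "is_basis S indep B" and "b \<in> B"
  shows "cocycle (fund_cocycle B b)"
  unfolding cocycle_def
proof (intro conjI allI impI)
  have "b \<in> S" using B \<open>b \<in> B\<close> unfolding is_basis_def by blast
  then show "fund_cocycle B b x = 0" if "x \<notin> S" for x
    using that unfolding fund_cocycle_def by auto
  fix c assume "cycle c"
  have "(\<Sum>x\<in>S. c x * fund_cocycle B b x)
      = (\<Sum>x\<in>S. c x * of_bool (x = b)) + (\<Sum>x\<in>S. c x * (if x \<in> S - B then fund_cycle B x b else 0))"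
    unfolding fund_cocycle_def by (simp add: distrib_left sum.distrib)
  also have "(\<Sum>x\<in>S. c x * of_bool (x = b)) = c b"
    using finite_S \<open>b \<in> S\<close> by (simp add: sum.delta)
  also have "(\<Sum>x\<in>S. c x * (if x \<in> S - B then fund_cycle B x b else 0))
      = (\<Sum>t\<in>S - B. c t * fund_cycle B t b)"
    using finite_S by (intro sum.mono_neutral_cong_right) auto
  also have "\<dots> = c b" by (rule cycle_eq_sum_fund_cycle[OF B \<open>cycle c\<close>, symmetric])
  finally show "(\<Sum>x\<in>S. c x * fund_cocycle B b x) = 0" by (simp add: bit_add_self)
qed

lemma cocycle_free_if_disjoint_basis:
  assumes B: "is_basis S indep B" and "X \<inter> B = {}"
  shows "cycle_free cocycle X"
proof (rule cycle_freeI)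
  fix z x assume "cocycle z" and z: "\<And>y. y \<notin> X \<Longrightarrow> z y = 0"
  show "z x = 0"
  proof (cases "x \<in> S - B")
    case True
    let ?G = "fund_cycle B x"
    have "(\<Sum>y\<in>S. ?G y * z y) = 0"
      using \<open>cocycle z\<close> fund_cycle(1)[OF B True] unfolding cocycle_def by blast
    moreover have "(\<Sum>y\<in>S. ?G y * z y) = ?G x * z x + (\<Sum>y\<in>S - {x}. ?G y * z y)"
      using finite_S True by (intro sum.remove) auto
    moreover have "?G y * z y = 0" if "y \<in> S - {x}" for y
      using that z \<open>X \<inter> B = {}\<close> fund_cycle(2)[OF B True, of y] by (cases "y \<in> B") auto
    ultimately show ?thesis using fund_cycle(3)[OF B True] by simp
  next
    case False
    then show ?thesis using \<open>cocycle z\<close> z \<open>X \<inter> B = {}\<close> unfolding cocycle_def by blast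
  qed
qed

lemma circuit_within_support:
  assumes "cycle z" and "z a \<noteq> 0" and "A \<subseteq> S" and "\<And>x. x \<notin> A \<Longrightarrow> z x = 0"
  obtains C where "C \<subseteq> A" and "is_circuit S indep C"
proof -
  have "\<not> cycle_free cycle A" using assms(1,2,4) cycle_freeD by metis
  then have "\<not> indep A" using indep_iff_cycle_free[OF \<open>A \<subseteq> S\<close>] by simp
  with \<open>A \<subseteq> S\<close> show ?thesis by (rule dependent_contains_circuit) (rule that)
qed

lemma cut_within_support:
  assumes "cocycle z" and "z a \<noteq> 0" and "A \<subseteq> S" and "\<And>x. x \<notin> A \<Longrightarrow> z x = 0"
  obtains K where "K \<subseteq> A" and "is_cut S indep K"
proof -
  have "\<not> cycle_free cocycle A" using assms(1,2,4) cycle_freeD by metis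
  then have "\<forall>B. is_basis S indep B \<longrightarrow> A \<inter> B \<noteq> {}" using cocycle_free_if_disjoint_basis by blast
  with \<open>A \<subseteq> S\<close> show ?thesis by (rule meets_all_bases_contains_cut) (rule that)
qed

lemma indep_if_no_rainbow_circuit:
  assumes "\<nexists>C. is_circuit S indep C \<and> rainbow col C" and "X \<subseteq> S" and "inj_on col X"
  shows "indep X"
proof (rule ccontr)
  assume "\<not> indep X"
  with \<open>X \<subseteq> S\<close> obtain C where "C \<subseteq> X" "is_circuit S indep C" by (rule dependent_contains_circuit)
  then show False using assms(1) inj_on_subset[OF \<open>inj_on col X\<close>] unfolding rainbow_def by blast
qed

lemma disjoint_basis_if_no_rainbow_cut:
  assumes "\<nexists>K. is_cut S indep K \<and> rainbow col K" and "X \<subseteq> S" and "inj_on col X"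
  shows "\<exists>B. is_basis S indep B \<and> X \<inter> B = {}"
proof (rule ccontr)
  assume "\<nexists>B. is_basis S indep B \<and> X \<inter> B = {}"
  then have "\<forall>B. is_basis S indep B \<longrightarrow> X \<inter> B \<noteq> {}" by blast
  with \<open>X \<subseteq> S\<close> obtain K where "K \<subseteq> X" "is_cut S indep K" by (rule meets_all_bases_contains_cut)
  then show False using assms(1) inj_on_subset[OF \<open>inj_on col X\<close>] unfolding rainbow_def by blast
qed

lemma Diff_is_basis:
  assumes B0: "is_basis S indep B0" and "T \<inter> B0 = {}"
    and "card T = card S - matroid_rank S indep" and "T \<subseteq> S"
  shows "is_basis S indep (S - T)"
proof -
  have "B0 \<subseteq> S - T" using B0 \<open>T \<inter> B0 = {}\<close> unfolding is_basis_def by blast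
  have "card B0 = matroid_rank S indep" using B0 by (rule card_basis)
  moreover have "card B0 \<le> card S" using B0 finite_S unfolding is_basis_def by (simp add: card_mono)
  moreover have "card (S - T) = card S - card T"
    using \<open>T \<subseteq> S\<close> finite_S by (intro card_Diff_subset) (auto intro: finite_subset)
  ultimately have "card B0 = card (S - T)" using assms(3) by linarith
  then have "B0 = S - T" using \<open>B0 \<subseteq> S - T\<close> finite_S by (intro card_subset_eq) auto
  with B0 show ?thesis by simp
qed

lemma monochromatic_cut_if_no_rainbow_circuit:
  fixes col :: "'a \<Rightarrow> 'c"
  assumes "S \<noteq> {}" and "card (col ` S) = matroid_rank S indep"
    and no_rainbow: "\<nexists>C. is_circuit S indep C \<and> rainbow col C"
  shows "\<exists>K. is_cut S indep K \<and> monochromatic col K"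
proof -
  obtain B where "B \<subseteq> S" "inj_on col B" "col ` B = col ` S" by (rule ex_transversal)
  have "card B = matroid_rank S indep"
    using card_image[OF \<open>inj_on col B\<close>] \<open>col ` B = col ` S\<close> assms(2) by simp
  with indep_if_no_rainbow_circuit[OF no_rainbow \<open>B \<subseteq> S\<close> \<open>inj_on col B\<close>]
  have B: "is_basis S indep B" by (rule basis_if_card_rank)
  have "B \<union> (S - B) = S" using \<open>B \<subseteq> S\<close> by blast
  interpret coloured_fundamental_system B "S - B" col cycle "fund_cycle B"
  proof
    show "finite (S - B)" using finite_S by simp
    show "B \<noteq> {}" using \<open>col ` B = col ` S\<close> \<open>S \<noteq> {}\<close> by auto
    show "col ` (S - B) \<subseteq> col ` B" using \<open>col ` B = col ` S\<close> by blast
    show "cycle_free cycle X" if "X \<subseteq> B \<union> (S - B)" "inj_on col X" for X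
      using that indep_if_no_rainbow_circuit[OF no_rainbow, of X] indep_iff_cycle_free[of X]
        \<open>B \<union> (S - B) = S\<close> by simp
  qed (use \<open>inj_on col B\<close> fund_cycle[OF B] cycle_zero cycle_add in auto)
  obtain b0 where "b0 \<in> B" and b0: "\<forall>e\<in>S - B. col e \<noteq> col b0 \<longrightarrow> fund_cycle B e b0 = 0"
    using ex_monochromatic_column by blast
  let ?A = "{x \<in> S. col x = col b0}"
  \<comment> \<open>the fundamental cocycle of b0 lives in the colour class of b0\<close>
  obtain K where "K \<subseteq> ?A" and "is_cut S indep K"
  proof (rule cut_within_support)
    show "cocycle (fund_cocycle B b0)" using B \<open>b0 \<in> B\<close> by (rule cocycle_fund_cocycle)
    show "fund_cocycle B b0 b0 \<noteq> 0" using \<open>b0 \<in> B\<close> unfolding fund_cocycle_def by simp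
    show "fund_cocycle B b0 x = 0" if "x \<notin> ?A" for x
      using that b0 \<open>b0 \<in> B\<close> \<open>B \<subseteq> S\<close> unfolding fund_cocycle_def by auto
  qed auto
  moreover have "monochromatic col K" using \<open>K \<subseteq> ?A\<close> by (intro monochromatic_subset) auto
  ultimately show ?thesis by blast
qed

lemma monochromatic_circuit_if_no_rainbow_cut:
  fixes col :: "'a \<Rightarrow> 'c"
  assumes "S \<noteq> {}" and "card (col ` S) = card S - matroid_rank S indep"
    and no_rainbow: "\<nexists>K. is_cut S indep K \<and> rainbow col K"
  shows "\<exists>C. is_circuit S indep C \<and> monochromatic col C"
proof -
  obtain T where T: "T \<subseteq> S" "inj_on col T" "col ` T = col ` S" by (rule ex_transversal)
  define B where "B = S - T"
  obtain B0 where "is_basis S indep B0" "T \<inter> B0 = {}"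
    using disjoint_basis_if_no_rainbow_cut[OF no_rainbow T(1,2)] by blast
  moreover have "card T = card S - matroid_rank S indep"
    using card_image[OF \<open>inj_on col T\<close>] \<open>col ` T = col ` S\<close> assms(2) by simp
  ultimately have B: "is_basis S indep B" unfolding B_def using \<open>T \<subseteq> S\<close> by (rule Diff_is_basis)
  have "T = S - B" and "T \<union> B = S" using \<open>T \<subseteq> S\<close> unfolding B_def by blast+
  \<comment> \<open>T is a basis of the dual matroid, whose fundamental cycles are the fundamental cocycles\<close>
  interpret coloured_fundamental_system T B col cocycle "fund_cocycle B"
  proof
    show "finite B" using finite_S unfolding B_def by simp
    show "T \<noteq> {}" using \<open>col ` T = col ` S\<close> \<open>S \<noteq> {}\<close> by auto
    show "col ` B \<subseteq> col ` T" using \<open>col ` T = col ` S\<close> unfolding B_def by blast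
    show "cycle_free cocycle X" if "X \<subseteq> T \<union> B" "inj_on col X" for X
      using disjoint_basis_if_no_rainbow_cut[OF no_rainbow, of X] that \<open>T \<union> B = S\<close>
        cocycle_free_if_disjoint_basis by auto
    show "fund_cocycle B b x = 0" if "b \<in> B" "x \<notin> insert b T" for b x
      using that \<open>T = S - B\<close> unfolding fund_cocycle_def by auto
    show "fund_cocycle B b b = 1" if "b \<in> B" for b
      using that unfolding fund_cocycle_def by simp
  qed (use \<open>inj_on col T\<close> cocycle_fund_cocycle[OF B] cocycle_zero cocycle_add in \<open>auto simp: B_def\<close>)
  obtain t0 where "t0 \<in> T" and t0: "\<forall>b\<in>B. col b \<noteq> col t0 \<longrightarrow> fund_cocycle B b t0 = 0"
    using ex_monochromatic_column by blast
  then have "t0 \<in> S - B" using \<open>T = S - B\<close> by blast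
  let ?A = "{x \<in> S. col x = col t0}"
  \<comment> \<open>the fundamental cycle of t0 lives in the colour class of t0\<close>
  obtain C where "C \<subseteq> ?A" and "is_circuit S indep C"
  proof (rule circuit_within_support)
    show "cycle (fund_cycle B t0)" using B \<open>t0 \<in> S - B\<close> by (rule fund_cycle(1))
    show "fund_cycle B t0 t0 \<noteq> 0" using fund_cycle(3)[OF B \<open>t0 \<in> S - B\<close>] by simp
    show "fund_cycle B t0 x = 0" if "x \<notin> ?A" for x
    proof (cases "x \<in> B")
      case True
      then show ?thesis
        using that t0 \<open>T \<union> B = S\<close> fund_cocycle_eq_fund_cycle[OF True \<open>t0 \<in> S - B\<close>] by auto
    next
      case False
      then have "x \<notin> insert t0 B" using that \<open>t0 \<in> S - B\<close> by blast
      then show ?thesis by (rule fund_cycle(2)[OF B \<open>t0 \<in> S - B\<close>])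
    qed
  qed auto
  moreover have "monochromatic col C" using \<open>C \<subseteq> ?A\<close> by (intro monochromatic_subset) auto
  ultimately show ?thesis by blast
qed

end

theorem theorem1:
  fixes S :: "'a set" and indep :: "'a set \<Rightarrow> bool"
    and n r :: nat
  assumes "binary_matroid S indep"
    and "loopless S indep"
    and "S \<noteq> {}"
    and "card S = n"
    and "matroid_rank S indep = r"
  shows "(\<forall>col :: 'a \<Rightarrow> nat. card (col ` S) = r \<longrightarrow>
            (\<exists>C. is_circuit S indep C \<and> rainbow col C) \<or>
            (\<exists>K. is_cut S indep K \<and> monochromatic col K))
       \<and> (\<forall>col :: 'a \<Rightarrow> nat. card (col ` S) = n - r \<longrightarrow>
            (\<exists>K. is_cut S indep K \<and> rainbow col K) \<or>
            (\<exists>C. is_circuit S indep C \<and> monochromatic col C))"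
proof -
  obtain m v where "matroid S indep" and "\<forall>X. X \<subseteq> S \<longrightarrow> (indep X \<longleftrightarrow> gf2_col_indep m v X)"
    using assms(1) unfolding binary_matroid_def by blast
  then interpret gf2_represented_matroid S indep m v by unfold_locales blast+
  show ?thesis
    unfolding assms(4,5)[symmetric]
    using monochromatic_cut_if_no_rainbow_circuit monochromatic_circuit_if_no_rainbow_cut assms(3)
    by blast
qed

end
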